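(* Let $q$ be an odd prime power. If $\{x_k\}_{k\in[n]}$ in $\mathbb{F}_{q^2}^d$ is an $(a,c_1,c_2)$-projective $2$-design for some $a,c_1,c_2\in\mathbb{F}_q$, then $n\ge d^2$.
   Context: For $a\in\mathbb{F}_{q^2}$ write $\overline{a}=a^q$; $A^*$ is conjugate transpose; $\langle x,y\rangle=x^*y$ on $\mathbb{F}_{q^2}^d$ and analogously on $(\mathbb{F}_{q^2}^d)^{\otimes 2}$. For a nondegenerate subspace $V$ (i.e. $V\cap V^\perp=\{0\}$), a family $\{y_k\}_{k\in[n]}$ in $V$ is a $c$-tight frame for $V$ ($c\in\mathbb{F}_q$) if $\operatorname{span}\{y_k\}=V$ and $\sum_k\langle y_k,y\rangle y_k=cy$ for all $y\in V$. $(\mathbb{F}_{q^2}^d)^{\otimes2}_{\mathrm{sym}}=\{\sum_{i,j}c_{ij}e_i\otimes e_j:c_{ij}=c_{ji}\}$ is nondegenerate with orthogonal projection $\Pi_d^{(2)}=\frac12\sum_{i,j}(e_ie_i^*\otimes e_je_j^*+e_ie_j^*\otimes e_je_i^* )$. A family $\{x_k\}_{k\in[n]}$ in $\mathbb{F}_{q^2}^d$ is an $(a,c_1,c_2)$-projective $2$-design ($a,c_1,c_2\in\mathbb{F}_q$) if (i) $\langle x_k,x_k\rangle=a$ for all $k$, (ii) $\{x_k\}$ is a $c_1$-tight frame for $\mathbb{F}_{q^2}^d$, and (iii) $\{x_k\otimes x_k\}$ is a $c_2$-tight frame for $(\mathbb{F}_{q^2}^d)^{\otimes 2}_{\mathrm{sym}}$.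 *)

theory Defs
  imports "HOL-Computational_Algebra.Primes"
begin

text \<open>The field F_{q^2} is a type 'a::field with q^2 elements; conjugation is a \<mapsto> a^q,
  and F_q is the fixed field {a. a^q = a}. Vectors in F_{q^2}^d are functions 'i \<Rightarrow> 'a
  on a finite index type 'i with d = CARD('i); tensors in (F^d)^{\<otimes>2} are functions on
  'i \<times> 'i (coefficients w.r.t. e_i \<otimes> e_j).\<close>

definition conj_q :: "nat \<Rightarrow> 'a::field \<Rightarrow> 'a" where
  "conj_q q a = a ^ q"

definition in_Fq :: "nat \<Rightarrow> 'a::field \<Rightarrow> bool" where
  "in_Fq q a \<longleftrightarrow> conj_q q a = a"

definition hinner :: "nat \<Rightarrow> ('i::finite \<Rightarrow> 'a::field) \<Rightarrow> ('i \<Rightarrow> 'a) \<Rightarrow> 'a" where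
  "hinner q x y = (\<Sum>i\<in>UNIV. conj_q q (x i) * y i)"

definition fam_span :: "nat \<Rightarrow> (nat \<Rightarrow> ('i \<Rightarrow> 'a::field)) \<Rightarrow> ('i \<Rightarrow> 'a) set" where
  "fam_span n y = {v. \<exists>c::nat \<Rightarrow> 'a. v = (\<lambda>i. \<Sum>k<n. c k * y k i)}"

definition tight_frame ::
  "nat \<Rightarrow> 'a::field \<Rightarrow> nat \<Rightarrow> (nat \<Rightarrow> ('i::finite \<Rightarrow> 'a)) \<Rightarrow> ('i \<Rightarrow> 'a) set \<Rightarrow> bool" where
  "tight_frame q c n y V \<longleftrightarrow>
     (\<forall>k<n. y k \<in> V) \<and> fam_span n y = V \<and>
     (\<forall>v\<in>V. (\<lambda>i. \<Sum>k<n. hinner q (y k) v * y k i) = (\<lambda>i. c * v i))"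

definition tensor2 :: "('i \<Rightarrow> 'a::field) \<Rightarrow> ('i \<times> 'i \<Rightarrow> 'a)" where
  "tensor2 x = (\<lambda>(i, j). x i * x j)"

definition sym_tensors :: "('i \<times> 'i \<Rightarrow> 'a) set" where
  "sym_tensors = {T. \<forall>i j. T (i, j) = T (j, i)}"

definition projective_2_design ::
  "nat \<Rightarrow> 'a::field \<Rightarrow> 'a \<Rightarrow> 'a \<Rightarrow> nat \<Rightarrow> (nat \<Rightarrow> ('i::finite \<Rightarrow> 'a)) \<Rightarrow> bool" where
  "projective_2_design q a c1 c2 n x \<longleftrightarrow>
     in_Fq q a \<and> in_Fq q c1 \<and> in_Fq q c2 \<and>
     (\<forall>k<n. hinner q (x k) (x k) = a) \<and>
     tight_frame q c1 n x UNIV \<and>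
     tight_frame q c2 n (\<lambda>k. tensor2 (x k)) sym_tensors"

end

theory Submission
  imports Defs "HOL-Number_Theory.Residues" "HOL-Library.Cardinality"
    "HOL-Library.Function_Algebras" "HOL-Probability.Product_PMF"
begin

text \<open>Everything is a count over the finite field \<open>F\<close>: we embed the \<open>d \<times> d\<close> matrices, or a set
  of the same size, into \<open>F\<^sup>n\<close>. The design condition on the \<open>x\<^sub>k \<otimes> x\<^sub>k\<close> yields, for every matrix
  \<open>A\<close>, the identity \<open>2 \<Sum>\<^sub>k (x\<^sub>k\<^sup>* A x\<^sub>k) x\<^sub>k x\<^sub>k\<^sup>* = c\<^sub>2 (A + tr A \<cdot> I)\<close>.
  If \<open>c\<^sub>2 \<noteq> 0\<close> and \<open>a \<noteq> 0\<close>, the map \<open>A \<mapsto> (x\<^sub>k\<^sup>* A x\<^sub>k)\<^sub>k\<close> is injective, since its kernel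
  consists of scalar matrices \<open>t I\<close> with \<open>t a = 0\<close>. If \<open>c\<^sub>2 \<noteq> 0\<close> and \<open>a = 0\<close>, the synthesis map
  \<open>c \<mapsto> \<Sum>\<^sub>k c\<^sub>k x\<^sub>k x\<^sub>k\<^sup>*\<close> hits every trace-zero matrix and kills a line, so
  \<open>|F|\<^sup>n \<ge> |F| \<cdot> |trace zero| \<ge> |F|\<^bsup>d\<^sup>2\<^esup>\<close>. If \<open>c\<^sub>2 = 0\<close>, the \<open>x\<^sub>k \<otimes> x\<^sub>k\<close> span the symmetric
  tensors but every symmetric \<open>T\<close> has vanishing frame sum; as the Hermitian form is nondegenerate on
  symmetric tensors in odd characteristic, \<open>T \<mapsto> (\<langle>x\<^sub>k \<otimes> x\<^sub>k, T\<rangle>)\<^sub>k\<close> embeds them into the kernel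
  of the synthesis map, whence \<open>|F|\<^sup>n \<ge> |Sym|\<^sup>2 \<ge> |F|\<^bsup>d\<^sup>2\<^esup>\<close>.\<close>

lemma CHAR_eq_of_card_eq_prime_power:
  assumes "prime p" and "CARD('a::idom) = p ^ m"
  shows "CHAR('a) = p"
proof -
  have "finite (UNIV :: 'a set)"
    using assms by (intro card_ge_0_finite) (simp add: prime_gt_0_nat)
  then have "prime CHAR('a)"
    by (intro prime_CHAR_semidom finite_imp_CHAR_pos)
  moreover have "CHAR('a) dvd p ^ m"
    using CHAR_dvd_CARD[where 'a = 'a] assms(2) by simp
  ultimately show ?thesis
    using assms(1) by (metis prime_dvd_power primes_dvd_imp_eq)
qed

lemma two_neq_zero_if_odd_CHAR:
  assumes "odd CHAR('a::field)"
  shows "(2::'a) \<noteq> 0"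
proof
  assume "(2::'a) = 0"
  then have "CHAR('a) dvd 2"
    by (metis of_nat_eq_0_iff_char_dvd of_nat_numeral)
  then have "CHAR('a) dvd 1"
    using assms two_is_prime_nat by (metis dvd_refl prime_nat_iff)
  then show False
    using of_nat_eq_0_iff_char_dvd[of 1, where 'a = 'a] by simp
qed

lemma conj_q_sum:
  assumes "prime CHAR('a::field)" and "q = CHAR('a) ^ m"
  shows "conj_q q (sum f A) = (\<Sum>i\<in>A. conj_q q (f i :: 'a))"
  unfolding conj_q_def by (rule freshmans_dream_sum'[OF assms])

lemma conj_q_mult: "conj_q q (a * b) = conj_q q a * conj_q q (b :: 'a::field)"
  by (simp add: conj_q_def power_mult_distrib)

lemma conj_q_zero: "q > 0 \<Longrightarrow> conj_q q (0 :: 'a::field) = 0"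
  by (simp add: conj_q_def)

lemma conj_q_one [simp]: "conj_q q (1 :: 'a::field) = 1"
  by (simp add: conj_q_def)

definition coord_vectors :: "nat \<Rightarrow> (nat \<Rightarrow> 'a::zero) set" where
  "coord_vectors n = PiE_dflt {..<n} 0 (\<lambda>_. UNIV)"

lemma coord_vectors_iff: "c \<in> coord_vectors n \<longleftrightarrow> (\<forall>k\<ge>n. c k = 0)"
  by (auto simp: coord_vectors_def PiE_dflt_def)

lemma finite_coord_vectors: "finite (UNIV :: 'a set) \<Longrightarrow> finite (coord_vectors n :: (nat \<Rightarrow> 'a::zero) set)"
  unfolding coord_vectors_def by (intro finite_PiE_dflt) auto

lemma card_coord_vectors:
  "finite (UNIV :: 'a set) \<Longrightarrow> card (coord_vectors n :: (nat \<Rightarrow> 'a::zero) set) = CARD('a) ^ n"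
  unfolding coord_vectors_def by (subst card_PiE_dflt) auto

lemma coord_vectors_add:
  fixes c d :: "nat \<Rightarrow> 'a::monoid_add"
  shows "c \<in> coord_vectors n \<Longrightarrow> d \<in> coord_vectors n \<Longrightarrow> c + d \<in> coord_vectors n"
  by (simp add: coord_vectors_iff)

lemma card_kernel_mult_card_image_le:
  fixes f :: "'u::cancel_semigroup_add \<Rightarrow> 'v::monoid_add"
  assumes "finite U"
    and add_closed: "\<And>u v. u \<in> U \<Longrightarrow> v \<in> U \<Longrightarrow> u + v \<in> U"
    and additive: "\<And>u v. f (u + v) = f u + f v"
    and kernel: "K \<subseteq> U" "\<And>k. k \<in> K \<Longrightarrow> f k = 0"
    and image: "S \<subseteq> f ` U"
  shows "card K * card S \<le> card U"
proof -
  have "\<forall>s\<in>S. \<exists>u. u \<in> U \<and> f u = s"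
    using image by blast
  then obtain g where g: "\<And>s. s \<in> S \<Longrightarrow> g s \<in> U \<and> f (g s) = s"
    by metis
  have f_shift: "f (k + g s) = s" if "k \<in> K" "s \<in> S" for k s
    using that g kernel(2) additive by simp
  have "inj_on (\<lambda>(k, s). k + g s) (K \<times> S)"
  proof (rule inj_onI, clarify)
    fix k s k' s'
    assume "k \<in> K" "s \<in> S" "k' \<in> K" "s' \<in> S" and eq: "k + g s = k' + g s'"
    then have "s = s'"
      using f_shift by metis
    with eq show "k = k' \<and> s = s'"
      by simp
  qed
  moreover have "(\<lambda>(k, s). k + g s) ` (K \<times> S) \<subseteq> U"
    using g kernel(1) add_closed by auto
  ultimately have "card (K \<times> S) \<le> card U"
    using \<open>finite U\<close> by (rule card_inj_on_le)
  then show ?thesis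
    by (simp add: card_cartesian_product)
qed

definition mat_trace :: "('i::finite \<times> 'i \<Rightarrow> 'a::comm_monoid_add) \<Rightarrow> 'a" where
  "mat_trace A = (\<Sum>i\<in>UNIV. A (i, i))"

lemma card_matrices: "CARD('i::finite \<times> 'i \<Rightarrow> 'a) = CARD('a) ^ (CARD('i) ^ 2)"
  by (simp add: card_fun power2_eq_square)

lemma card_matrices_le_card_trace_zero_mult:
  assumes "finite (UNIV :: 'a set)"
  shows "CARD('i::finite \<times> 'i \<Rightarrow> 'a::ab_group_add)
           \<le> card {A :: 'i \<times> 'i \<Rightarrow> 'a. mat_trace A = 0} * CARD('a)"
proof -
  fix i0 :: 'i
  define detrace where
    "detrace A = ((\<lambda>p. A p - (if p = (i0, i0) then mat_trace A else 0)), mat_trace A)"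
    for A :: "'i \<times> 'i \<Rightarrow> 'a"
  have "inj detrace"
    by (rule injI) (auto simp: detrace_def fun_eq_iff split: if_splits)
  moreover have "range detrace \<subseteq> {A. mat_trace A = 0} \<times> UNIV"
    by (auto simp: detrace_def mat_trace_def sum_subtractf)
  moreover have "finite (UNIV :: ('i \<times> 'i \<Rightarrow> 'a) set)"
    using assms by (simp add: finite_UNIV_fun)
  then have "finite {A :: 'i \<times> 'i \<Rightarrow> 'a. mat_trace A = 0}"
    by (rule finite_subset[OF subset_UNIV])
  then have "finite ({A :: 'i \<times> 'i \<Rightarrow> 'a. mat_trace A = 0} \<times> (UNIV :: 'a set))"
    using assms by (intro finite_cartesian_product)
  ultimately have "CARD('i \<times> 'i \<Rightarrow> 'a) \<le> card ({A :: 'i \<times> 'i \<Rightarrow> 'a. mat_trace A = 0} \<times> (UNIV :: 'a set))"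
    by (rule card_inj_on_le)
  then show ?thesis
    by (simp add: card_cartesian_product)
qed

text \<open>A matrix is determined by its two triangles, each extended to a symmetric tensor.\<close>

lemma card_matrices_le_card_sym_tensors_square:
  assumes "finite (UNIV :: 'a set)"
  shows "CARD('i::finite \<times> 'i \<Rightarrow> 'a) \<le> card (sym_tensors :: ('i \<times> 'i \<Rightarrow> 'a) set) ^ 2"
proof -
  let ?S = "sym_tensors :: ('i \<times> 'i \<Rightarrow> 'a) set"
  obtain r :: "'i \<Rightarrow> nat" where "inj r"
    using finite_imp_inj_to_nat_seg[of "UNIV :: 'i set"] by auto
  define lo where "lo = (\<lambda>(i, j). if r i \<le> r j then (i, j) else (j, i))"
  have lo_swap: "lo (prod.swap p) = lo p" for p
    using \<open>inj r\<close> by (cases p) (auto simp: lo_def injD)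
  have lo_cases: "lo p = p \<or> lo p = prod.swap p" for p
    by (cases p) (simp add: lo_def)
  define halves where "halves A = (A \<circ> lo, A \<circ> prod.swap \<circ> lo)" for A :: "'i \<times> 'i \<Rightarrow> 'a"
  have "A p = (if lo p = p then fst (halves A) p else snd (halves A) p)" for A p
    using lo_cases[of p] by (auto simp: halves_def)
  then have "inj halves"
    by (intro injI) (metis ext)
  moreover have "range halves \<subseteq> ?S \<times> ?S"
    using lo_swap by (auto simp: halves_def sym_tensors_def)
  moreover have "finite (UNIV :: ('i \<times> 'i \<Rightarrow> 'a) set)"
    using assms by (simp add: finite_UNIV_fun)
  then have "finite ?S"
    by (rule finite_subset[OF subset_UNIV])
  then have "finite (?S \<times> ?S)"
    by (intro finite_cartesian_product)
  ultimately have "CARD('i \<times> 'i \<Rightarrow> 'a) \<le> card (?S \<times> ?S)"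
    by (rule card_inj_on_le)
  then show ?thesis
    by (simp add: card_cartesian_product power2_eq_square)
qed

definition quad_form :: "nat \<Rightarrow> ('i::finite \<Rightarrow> 'a::field) \<Rightarrow> ('i \<times> 'i \<Rightarrow> 'a) \<Rightarrow> 'a" where
  "quad_form q y A = (\<Sum>i\<in>UNIV. \<Sum>j\<in>UNIV. conj_q q (y i) * A (i, j) * y j)"

definition outer :: "nat \<Rightarrow> ('i \<Rightarrow> 'a::field) \<Rightarrow> 'i \<times> 'i \<Rightarrow> 'a" where
  "outer q y = (\<lambda>(i, j). y i * conj_q q (y j))"

definition synthesis :: "nat \<Rightarrow> (nat \<Rightarrow> 'b \<Rightarrow> 'a::comm_semiring_1) \<Rightarrow> (nat \<Rightarrow> 'a) \<Rightarrow> 'b \<Rightarrow> 'a" where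
  "synthesis n t c = (\<lambda>p. \<Sum>k<n. c k * t k p)"

lemma synthesis_add: "synthesis n t (c + d) = synthesis n t c + synthesis n t d"
  by (simp add: synthesis_def fun_eq_iff sum.distrib distrib_right)

lemma fam_span_eq_synthesis_image: "fam_span n t = synthesis n t ` coord_vectors n"
proof
  show "fam_span n t \<subseteq> synthesis n t ` coord_vectors n"
  proof
    fix v assume "v \<in> fam_span n t"
    then obtain c where "v = synthesis n t c"
      by (auto simp: fam_span_def synthesis_def)
    moreover have "synthesis n t c = synthesis n t (\<lambda>k. if k < n then c k else 0)"
      by (simp add: synthesis_def)
    moreover have "(\<lambda>k. if k < n then c k else 0) \<in> coord_vectors n"
      by (simp add: coord_vectors_iff)
    ultimately show "v \<in> synthesis n t ` coord_vectors n"
      by blast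
  qed
qed (auto simp: fam_span_def synthesis_def)

lemma quad_form_diff: "quad_form q y (\<lambda>p. A p - B p) = quad_form q y A - quad_form q y B"
  by (simp add: quad_form_def algebra_simps sum_subtractf)

lemma quad_form_scalar: "quad_form q y (\<lambda>(i, j). if i = j then s else 0) = s * hinner q y y"
proof -
  have "quad_form q y (\<lambda>(i, j). if i = j then s else 0)
      = (\<Sum>i\<in>UNIV. \<Sum>j\<in>UNIV. if i = j then s * (conj_q q (y i) * y j) else 0)"
    unfolding quad_form_def by (intro sum.cong) auto
  then show ?thesis
    by (simp add: hinner_def sum_distrib_left)
qed

lemma quad_form_outer: "quad_form q y (outer q y) = hinner q y y ^ 2"
  by (simp add: quad_form_def outer_def hinner_def power2_eq_square sum_product mult_ac)

lemma mat_trace_outer: "mat_trace (outer q y) = hinner q y y"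
  by (simp add: mat_trace_def outer_def hinner_def mult.commute)

lemma hinner_diff_right: "hinner q y (\<lambda>p. A p - B p) = hinner q y A - hinner q y B"
  by (simp add: hinner_def right_diff_distrib sum_subtractf)

lemma hinner_synthesis_left:
  assumes "prime CHAR('a::field)" and "q = CHAR('a) ^ m"
  shows "hinner q (synthesis n t c) T = (\<Sum>k<n. conj_q q (c k) * hinner q (t k) (T :: 'i::finite \<Rightarrow> 'a))"
  by (simp add: hinner_def synthesis_def conj_q_sum[OF assms] conj_q_mult sum_distrib_left
      sum_distrib_right mult.assoc sum.swap[where A = "{..<n}"])

lemma sym_tensor_eq_0_if_orthogonal:
  fixes C :: "'i::finite \<times> 'i \<Rightarrow> 'a::field"
  assumes "q > 0" and "(2::'a) \<noteq> 0" and "C \<in> sym_tensors"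
    and orth: "\<And>S. S \<in> sym_tensors \<Longrightarrow> hinner q S C = 0"
  shows "C = 0"
proof
  fix p :: "'i \<times> 'i"
  obtain i j where p: "p = (i, j)"
    by (cases p)
  define S :: "'i \<times> 'i \<Rightarrow> 'a" where "S p' = (if p' \<in> {(i, j), (j, i)} then 1 else 0)" for p'
  have "S \<in> sym_tensors"
    by (auto simp: sym_tensors_def S_def)
  have "hinner q S C = (\<Sum>p'\<in>UNIV. if p' \<in> {(i, j), (j, i)} then C p' else 0)"
    unfolding hinner_def S_def by (intro sum.cong) (auto simp: conj_q_zero[OF \<open>q > 0\<close>])
  also have "\<dots> = sum C {(i, j), (j, i)}"
    by (simp only: sum.inter_restrict[OF finite, symmetric] Int_UNIV_left)
  also have "\<dots> = (if i = j then C (i, j) else 2 * C (i, j))"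
  proof (cases "i = j")
    case False
    have "C (j, i) = C (i, j)"
      using \<open>C \<in> sym_tensors\<close> unfolding sym_tensors_def by blast
    have "sum C {(i, j), (j, i)} = C (i, j) + C (j, i)"
      using False by simp
    also have "\<dots> = 2 * C (i, j)"
      unfolding \<open>C (j, i) = C (i, j)\<close> by (rule mult_2[symmetric])
    finally show ?thesis
      using False by simp
  qed simp
  finally show "C p = 0 p"
    using orth[OF \<open>S \<in> sym_tensors\<close>] \<open>(2::'a) \<noteq> 0\<close> p by (auto split: if_splits)
qed

lemma hinner_tensor2_sym_indicator:
  "hinner q (tensor2 y) (\<lambda>p. of_bool (p = (l, m)) + of_bool (p = (m, l)))
     = 2 * (conj_q q (y l) * conj_q q (y m :: 'a::field))"
proof -
  have "hinner q (tensor2 y) (\<lambda>p. of_bool (p = (l, m)) + of_bool (p = (m, l)))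
      = conj_q q (tensor2 y (l, m)) + conj_q q (tensor2 y (m, l))"
    by (simp add: hinner_def distrib_left sum.distrib)
  also have "\<dots> = 2 * (conj_q q (y l) * conj_q q (y m))"
    unfolding tensor2_def prod.case mult.commute[of "y m" "y l"] mult_2 conj_q_mult ..
  finally show ?thesis .
qed

context
  fixes q n :: nat and c2 :: "'a::field" and x :: "nat \<Rightarrow> 'd::finite \<Rightarrow> 'a"
  assumes sym_frame: "tight_frame q c2 n (\<lambda>k. tensor2 (x k)) sym_tensors"
begin

lemma design_fourth_moment:
  "(\<Sum>k<n. 2 * (conj_q q (x k l) * conj_q q (x k m)) * (x k i * x k j))
     = c2 * (of_bool ((i, j) = (l, m)) + of_bool ((i, j) = (m, l)))"
proof -
  define v :: "'d \<times> 'd \<Rightarrow> 'a" where "v p = of_bool (p = (l, m)) + of_bool (p = (m, l))" for p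
  have "v \<in> sym_tensors"
    unfolding sym_tensors_def v_def by (simp add: add.commute conj_commute)
  then have "(\<lambda>p. \<Sum>k<n. hinner q (tensor2 (x k)) v * tensor2 (x k) p) = (\<lambda>p. c2 * v p)"
    using sym_frame by (simp add: tight_frame_def)
  from fun_cong[OF this, of "(i, j)"] show ?thesis
    unfolding v_def hinner_tensor2_sym_indicator by (simp add: tensor2_def)
qed

lemma design_outer_identity:
  "2 * synthesis n (\<lambda>k. outer q (x k)) (\<lambda>k. quad_form q (x k) A) (i, m)
     = c2 * (A (i, m) + of_bool (i = m) * mat_trace A)"
proof -
  have "2 * synthesis n (\<lambda>k. outer q (x k)) (\<lambda>k. quad_form q (x k) A) (i, m)
      = (\<Sum>k<n. \<Sum>l\<in>UNIV. \<Sum>j\<in>UNIV.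
           A (l, j) * (2 * (conj_q q (x k l) * conj_q q (x k m)) * (x k i * x k j)))"
    by (simp add: synthesis_def outer_def quad_form_def sum_distrib_left sum_distrib_right mult_ac)
  also have "\<dots> = (\<Sum>l\<in>UNIV. \<Sum>j\<in>UNIV. A (l, j) *
           (\<Sum>k<n. 2 * (conj_q q (x k l) * conj_q q (x k m)) * (x k i * x k j)))"
    by (simp add: sum_distrib_left sum.swap[where A = "{..<n}"])
  also have "\<dots> = c2 * ((\<Sum>l\<in>UNIV. \<Sum>j\<in>UNIV. if j = m then (if l = i then A (l, j) else 0) else 0)
           + (\<Sum>l\<in>UNIV. \<Sum>j\<in>UNIV. if l = j then of_bool (i = m) * A (l, j) else 0))"
    unfolding design_fourth_moment sum_distrib_left sum.distrib[symmetric]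
    by (intro sum.cong) (auto simp: algebra_simps)
  also have "\<dots> = c2 * (A (i, m) + of_bool (i = m) * mat_trace A)"
    by (simp add: mat_trace_def sum_distrib_left)
  finally show ?thesis .
qed

lemma card_matrices_le_if_anisotropic:
  assumes "finite (UNIV :: 'a set)" and "c2 \<noteq> 0" and "n > 0"
    and norm: "\<forall>k<n. hinner q (x k) (x k) = a" and "a \<noteq> 0"
  shows "CARD('d \<times> 'd \<Rightarrow> 'a) \<le> card (coord_vectors n :: (nat \<Rightarrow> 'a) set)"
proof -
  define coeffs where "coeffs A = (\<lambda>k. if k < n then quad_form q (x k) A else 0)" for A
  have "inj coeffs"
  proof (rule injI)
    fix A B assume "coeffs A = coeffs B"
    define C where "C = (\<lambda>p. A p - B p)"
    have quad_C: "quad_form q (x k) C = 0" if "k < n" for k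
      using fun_cong[OF \<open>coeffs A = coeffs B\<close>, of k] that by (simp add: coeffs_def C_def quad_form_diff)
    then have "synthesis n (\<lambda>k. outer q (x k)) (\<lambda>k. quad_form q (x k) C) = (\<lambda>_. 0)"
      by (auto simp: synthesis_def intro!: sum.neutral)
    then have C_scalar: "C (i, j) = (if i = j then - mat_trace C else 0)" for i j
      using design_outer_identity[of C i j] \<open>c2 \<noteq> 0\<close> by (auto simp: eq_neg_iff_add_eq_0)
    then have "quad_form q (x 0) C = - mat_trace C * a"
      using quad_form_scalar[of q "x 0" "- mat_trace C"] norm \<open>n > 0\<close>
      by (simp add: case_prod_unfold flip: C_scalar)
    then have "mat_trace C = 0"
      using quad_C[OF \<open>n > 0\<close>] \<open>a \<noteq> 0\<close> by simp
    then have "C = (\<lambda>_. 0)"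
      using C_scalar by (simp add: fun_eq_iff split_paired_All)
    then show "A = B"
      by (simp add: C_def fun_eq_iff)
  qed
  moreover have "range coeffs \<subseteq> coord_vectors n"
    by (auto simp: coeffs_def coord_vectors_iff)
  ultimately show ?thesis
    by (rule card_inj_on_le[OF _ _ finite_coord_vectors[OF assms(1)]])
qed

lemma card_matrices_le_if_isotropic:
  assumes "finite (UNIV :: 'a set)" and "c2 \<noteq> 0" and "n > 0"
    and "hinner q (x 0) (x 0) = 0"
  shows "CARD('d \<times> 'd \<Rightarrow> 'a) \<le> card (coord_vectors n :: (nat \<Rightarrow> 'a) set)"
proof -
  let ?f = "synthesis n (\<lambda>k. outer q (x k))"
  define M where "M = outer q (x 0)"
  txt \<open>The design identity for \<open>A = M\<close>, whose trace \<open>a\<close> vanishes, gives a kernel vector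
    of the synthesis map with \<open>0\<close>-th entry \<open>-c\<^sub>2\<close>.\<close>
  define \<kappa> where "\<kappa> = (\<lambda>k. (if k < n then 2 * quad_form q (x k) M else 0) - (if k = 0 then c2 else 0))"
  have "\<kappa> 0 = - c2"
    using assms(3,4) by (simp add: \<kappa>_def M_def quad_form_outer)
  have "?f \<kappa> (i, j) = 0" for i j
  proof -
    have "(\<Sum>k<n. (if k = 0 then c2 else 0) * outer q (x k) (i, j))
        = (\<Sum>k<n. if k = 0 then c2 * outer q (x k) (i, j) else 0)"
      by (intro sum.cong) auto
    then have "?f \<kappa> (i, j) = 2 * ?f (\<lambda>k. quad_form q (x k) M) (i, j) - c2 * M (i, j)"
      using assms(3) by (simp add: synthesis_def \<kappa>_def M_def left_diff_distrib sum_subtractf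
          sum_distrib_left mult.assoc)
    also have "\<dots> = c2 * of_bool (i = j) * mat_trace M"
      by (simp add: design_outer_identity algebra_simps)
    also have "\<dots> = 0"
      using assms(4) by (simp add: M_def mat_trace_outer)
    finally show ?thesis .
  qed
  then have "?f \<kappa> = 0"
    by (simp add: fun_eq_iff)
  have line_kernel: "?f c = 0" if c: "c \<in> range (\<lambda>s k. s * \<kappa> k)" for c
  proof -
    obtain s where "c = (\<lambda>k. s * \<kappa> k)"
      using c by blast
    then have "?f c = (\<lambda>p. s * ?f \<kappa> p)"
      by (simp add: synthesis_def sum_distrib_left mult.assoc)
    with \<open>?f \<kappa> = 0\<close> show ?thesis
      by (simp add: zero_fun_def)
  qed
  have "inj (\<lambda>s k. s * \<kappa> k)"
  proof (rule injI)
    fix s s' assume "(\<lambda>k. s * \<kappa> k) = (\<lambda>k. s' * \<kappa> k)"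
    then have "s * \<kappa> 0 = s' * \<kappa> 0"
      by (rule fun_cong)
    then show "s = s'"
      using \<open>\<kappa> 0 = - c2\<close> \<open>c2 \<noteq> 0\<close> by simp
  qed
  then have card_line: "card (range (\<lambda>s k. s * \<kappa> k)) = CARD('a)"
    by (simp add: card_image)
  have line_vectors: "range (\<lambda>s k. s * \<kappa> k) \<subseteq> coord_vectors n"
    using assms(3) by (auto simp: coord_vectors_iff \<kappa>_def)
  have trace_zero_image: "{A. mat_trace A = 0} \<subseteq> ?f ` coord_vectors n"
  proof
    fix B :: "'d \<times> 'd \<Rightarrow> 'a" assume "B \<in> {A. mat_trace A = 0}"
    define c where "c = (\<lambda>k. if k < n then 2 / c2 * quad_form q (x k) B else 0)"
    have "?f c (i, j) = B (i, j)" for i j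
    proof -
      have "?f c (i, j) = 1 / c2 * (2 * ?f (\<lambda>k. quad_form q (x k) B) (i, j))"
        by (simp add: synthesis_def c_def sum_distrib_left mult_ac)
      then show ?thesis
        using \<open>B \<in> {A. mat_trace A = 0}\<close> \<open>c2 \<noteq> 0\<close> by (simp add: design_outer_identity)
    qed
    then have "B = ?f c"
      by (simp add: fun_eq_iff)
    moreover have "c \<in> coord_vectors n"
      by (simp add: c_def coord_vectors_iff)
    ultimately show "B \<in> ?f ` coord_vectors n"
      by (rule image_eqI)
  qed
  have "card (range (\<lambda>s k. s * \<kappa> k)) * card {A :: 'd \<times> 'd \<Rightarrow> 'a. mat_trace A = 0}
      \<le> card (coord_vectors n :: (nat \<Rightarrow> 'a) set)"
    by (rule card_kernel_mult_card_image_le[OF finite_coord_vectors[OF assms(1)] coord_vectors_add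
          synthesis_add line_vectors line_kernel trace_zero_image])
  then show ?thesis
    using card_matrices_le_card_trace_zero_mult[OF assms(1), where 'i = 'd] card_line
    by (simp add: mult.commute)
qed

lemma card_matrices_le_if_degenerate:
  assumes "finite (UNIV :: 'a set)" and "c2 = 0"
    and char: "prime CHAR('a)" "q = CHAR('a) ^ m" and "(2::'a) \<noteq> 0"
  shows "CARD('d \<times> 'd \<Rightarrow> 'a) \<le> card (coord_vectors n :: (nat \<Rightarrow> 'a) set)"
proof -
  define t where "t = (\<lambda>k. tensor2 (x k))"
  define coeffs where "coeffs T = (\<lambda>k. if k < n then hinner q (t k) T else 0)" for T
  have span: "synthesis n t ` coord_vectors n = sym_tensors"
    using sym_frame by (simp add: tight_frame_def t_def fam_span_eq_synthesis_image)
  have kernel: "synthesis n t c = 0" if c: "c \<in> coeffs ` sym_tensors" for c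
  proof -
    obtain T where "T \<in> sym_tensors" and c: "c = coeffs T"
      using c by blast
    have "(\<lambda>p. \<Sum>k<n. hinner q (t k) T * t k p) = (\<lambda>p. c2 * T p)"
      using sym_frame \<open>T \<in> sym_tensors\<close> by (simp add: tight_frame_def t_def)
    then show ?thesis
      using \<open>c2 = 0\<close> by (simp add: c synthesis_def coeffs_def zero_fun_def)
  qed
  have "inj_on coeffs sym_tensors"
  proof (rule inj_onI)
    fix T T' assume "T \<in> sym_tensors" "T' \<in> sym_tensors" and "coeffs T = coeffs T'"
    define C where "C = (\<lambda>p. T p - T' p)"
    have "C \<in> sym_tensors"
      unfolding sym_tensors_def
    proof (intro CollectI allI)
      fix i j
      have "T (i, j) = T (j, i)" and "T' (i, j) = T' (j, i)"
        using \<open>T \<in> sym_tensors\<close> \<open>T' \<in> sym_tensors\<close> unfolding sym_tensors_def by blast+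
      then show "C (i, j) = C (j, i)"
        unfolding C_def by (rule arg_cong2[where f = minus])
    qed
    moreover have "hinner q S C = 0" if "S \<in> sym_tensors" for S
    proof -
      obtain c where "S = synthesis n t c"
        using \<open>S \<in> sym_tensors\<close> span by blast
      moreover have "hinner q (t k) C = 0" if "k < n" for k
        using fun_cong[OF \<open>coeffs T = coeffs T'\<close>, of k] that
        by (simp add: coeffs_def C_def hinner_diff_right)
      ultimately show ?thesis
        by (simp add: hinner_synthesis_left[OF char])
    qed
    moreover have "q > 0"
      using char prime_gt_0_nat by simp
    ultimately have "C = 0"
      using sym_tensor_eq_0_if_orthogonal \<open>(2::'a) \<noteq> 0\<close> by blast
    then show "T = T'"
      by (simp add: C_def fun_eq_iff)
  qed
  then have card_coeffs: "card (coeffs ` sym_tensors) = card (sym_tensors :: ('d \<times> 'd \<Rightarrow> 'a) set)"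
    by (rule card_image)
  have coeffs_vectors: "coeffs ` sym_tensors \<subseteq> coord_vectors n"
    by (auto simp: coeffs_def coord_vectors_iff)
  have "card (coeffs ` sym_tensors) * card (sym_tensors :: ('d \<times> 'd \<Rightarrow> 'a) set)
      \<le> card (coord_vectors n :: (nat \<Rightarrow> 'a) set)"
    by (rule card_kernel_mult_card_image_le[OF finite_coord_vectors[OF assms(1)] coord_vectors_add
          synthesis_add coeffs_vectors kernel equalityD2[OF span]])
  then show ?thesis
    using card_matrices_le_card_sym_tensors_square[OF assms(1), where 'i = 'd] card_coeffs
    by (simp add: power2_eq_square)
qed

lemma card_matrices_le_card_coord_vectors:
  assumes "finite (UNIV :: 'a set)" and char: "prime CHAR('a)" "q = CHAR('a) ^ m"
    and "(2::'a) \<noteq> 0" and "n > 0" and norm: "\<forall>k<n. hinner q (x k) (x k) = a"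
  shows "CARD('d \<times> 'd \<Rightarrow> 'a) \<le> card (coord_vectors n :: (nat \<Rightarrow> 'a) set)"
proof (cases "c2 = 0")
  case True
  then show ?thesis
    using card_matrices_le_if_degenerate[OF assms(1) _ char assms(4)] by blast
next
  case False
  show ?thesis
  proof (cases "a = 0")
    case True
    then show ?thesis
      using card_matrices_le_if_isotropic[OF assms(1) False \<open>n > 0\<close>] norm \<open>n > 0\<close> by simp
  next
    case False
    then show ?thesis
      using card_matrices_le_if_anisotropic[OF assms(1) \<open>c2 \<noteq> 0\<close> \<open>n > 0\<close> norm] by blast
  qed
qed

end

lemma odd_prime_power_field:
  assumes "prime p" and "m > 0" and "odd q" and "q = p ^ m" and "CARD('a::field) = q ^ 2"
  shows "prime CHAR('a)" and "q = CHAR('a) ^ m" and "(2::'a) \<noteq> 0" and "1 < CARD('a)"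
proof -
  have "CHAR('a) = p"
    using assms(1,4,5) power_mult[of p m 2]
    by (intro CHAR_eq_of_card_eq_prime_power[where 'a = 'a, of p "m * 2"]) simp_all
  then show char: "prime CHAR('a)" "q = CHAR('a) ^ m"
    using assms(1,4) by simp_all
  show "(2::'a) \<noteq> 0"
    using assms(2,3) char by (intro two_neq_zero_if_odd_CHAR) (simp add: even_power)
  have "1 < q"
    unfolding char(2) by (rule one_less_power[OF prime_gt_1_nat[OF char(1)] \<open>m > 0\<close>])
  then show "1 < CARD('a)"
    unfolding assms(5) by (rule one_less_power) simp
qed

lemma pos_if_tight_frame_UNIV:
  assumes "tight_frame q c n (x :: nat \<Rightarrow> 'd::finite \<Rightarrow> 'a::field) UNIV"
  shows "n > 0"
proof (rule ccontr)
  assume "\<not> n > 0"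
  then have "(\<lambda>_. 1) \<in> fam_span 0 x"
    using assms by (simp add: tight_frame_def)
  then show False
    by (simp add: fam_span_def fun_eq_iff)
qed

theorem mainTheorem7:
  fixes q n :: nat and a c1 c2 :: "'a::field"
    and x :: "nat \<Rightarrow> ('d::finite \<Rightarrow> 'a)"
  assumes "\<exists>p m. prime p \<and> m > 0 \<and> q = p ^ m"
    and "odd q"
    and "card (UNIV :: 'a set) = q ^ 2"
    and "projective_2_design q a c1 c2 n x"
  shows "n \<ge> card (UNIV :: 'd set) ^ 2"
proof -
  obtain p m where "prime p" "m > 0" "q = p ^ m"
    using assms(1) by blast
  note field = odd_prime_power_field[OF this(1,2) assms(2) this(3) assms(3)]
  then have "finite (UNIV :: 'a set)"
    by (intro card_ge_0_finite) simp
  have norm: "\<forall>k<n. hinner q (x k) (x k) = a" and "n > 0"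
    and sym_frame: "tight_frame q c2 n (\<lambda>k. tensor2 (x k)) sym_tensors"
    using assms(4) pos_if_tight_frame_UNIV unfolding projective_2_design_def by blast+
  have "CARD('d \<times> 'd \<Rightarrow> 'a) \<le> card (coord_vectors n :: (nat \<Rightarrow> 'a) set)"
    using card_matrices_le_card_coord_vectors[OF sym_frame \<open>finite UNIV\<close> field(1-3) \<open>n > 0\<close> norm] .
  then have "CARD('a) ^ (CARD('d) ^ 2) \<le> CARD('a) ^ n"
    by (simp add: card_matrices card_coord_vectors[OF \<open>finite UNIV\<close>])
  then show ?thesis
    by (rule power_le_imp_le_exp[OF field(4)])
qed

end
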